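(* For all homogeneous $\varphi_1,\varphi_2,\psi\in CC^\bullet(\mathscr A)[1]$, as operators on $CC_\bullet(\mathscr A)[1]$: $\rho_{[\varphi_1,\varphi_2],\psi}-\rho_{\varphi_1,[\varphi_2,\psi]}+(-1)^{|\varphi_1|'|\varphi_2|'}\rho_{\varphi_2,[\varphi_1,\psi]}=[\mathcal L_{\varphi_1},\rho_{\varphi_2,\psi}]-(-1)^{|\varphi_1|'|\varphi_2|'}[\mathcal L_{\varphi_2},\rho_{\varphi_1,\psi}]$, where on the right $[\cdot,\cdot]$ is the graded commutator ($\mathcal L_\varphi$ has degree $|\varphi|'$, $\rho_{\varphi,\psi}$ has degree $|\varphi|'+|\psi|'$).
   Context: $R$ a graded-commutative ring containing $\mathbb Q$. $\mathscr A$: a set of objects with graded $R$-modules $\mathrm{Hom}_{\mathscr A}(X,Y)$. Set $\mathscr A(X_0,\dots,X_k):=\mathrm{Hom}(X_0,X_1)[1]\otimes\cdots\otimes\mathrm{Hom}(X_{k-1},X_k)[1]$; for $x$ in a shifted Hom, $|x|'$ denotes its shifted degree. $CC^\bullet(\mathscr A)=\prod_{X_0,\dots,X_k}\mathrm{Hom}_R(\mathscr A(X_0,\dots,X_k),\mathrm{Hom}(X_0,X_k))$ (graded), $CC_\bullet(\mathscr A)=\bigoplus\mathrm{Hom}(X_0,X_1)\otimes\mathscr A(X_1,\dots,X_k,X_0)$; elements of $CC_\bullet(\mathscr A)[1]$ are written $\mathbb X=x_0\otimes\cdots\otimes x_k$ with all $x_i$ in shifted Homs. For $\varphi\in CC^\bullet(\mathscr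 A)[1]$, $|\varphi|'$ denotes its degree in $CC^\bullet(\mathscr A)[1]$ (i.e. as a map of shifted spaces $\mathscr A(\cdots)\to\mathrm{Hom}[1]$). Operations: $(\varphi\circ\psi)(x_1,\dots,x_k)=\sum_{0\le i\le j\le k}(-1)^{|\psi|'(|x_1|'+\cdots+|x_i|')}\varphi(x_1,\dots,x_i,\psi(x_{i+1},\dots,x_j),x_{j+1},\dots,x_k)$; $[\varphi,\psi]=\varphi\circ\psi-(-1)^{|\varphi|'|\psi|'}\psi\circ\varphi$; $\mathcal L_\varphi(\mathbb X)=\sum_{0\le i\le j\le k}(-1)^{|\varphi|'(|x_0|'+\cdots+|x_i|')}x_0\otimes\cdots\otimes x_i\otimes\varphi(x_{i+1},\dots,x_j)\otimes x_{j+1}\otimes\cdots\otimes x_k+\sum_{0\le i\le j\le k}(-1)^{(|x_0|'+\cdots+|x_j|')(|x_{j+1}|'+\cdots+|x_k|')}\varphi(x_{j+1},\dots,x_k,x_0,\dots,x_i)\otimes x_{i+1}\otimes\cdots\otimes x_j$; $\rho_{\varphi,\psi}(\mathbb X)=\sum_{0\le i\le j\le s\le t\le k}(-1)^{\#}\varphi(x_{j+1},\dots,x_s,\psi(x_{s+1},\dots,x_t),x_{t+1},\dots,x_k,x_0,\dots,x_i)\otimes x_{i+1}\otimes\cdots\otimes x_j$, $\#=|\psi|'(|x_{j+1}|'+\cdots+|x_s|')+(|x_0|'+\cdots+|x_j|')(|x_{j+1}|'+\cdots+|x_k|')$. *)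

theory Defs
  imports Main "HOL-Library.Poly_Mapping"
begin

text \<open>H X Y d is the degree-d part of the shifted space Hom(X,Y)[1] (so degrees
are the shifted degrees |x|').  A homogeneous element of a shifted Hom is
recorded as a letter: source, target, shifted degree, value.\<close>

record ('o, 'm) letter =
  lsrc :: 'o
  ltgt :: 'o
  ldeg :: int
  lval :: 'm

definition graded_homs :: "('o \<Rightarrow> 'o \<Rightarrow> int \<Rightarrow> 'm::ab_group_add set) \<Rightarrow> bool" where
  "graded_homs H \<longleftrightarrow> (\<forall>X Y d. 0 \<in> H X Y d \<and> (\<forall>a\<in>H X Y d. \<forall>b\<in>H X Y d. a + b \<in> H X Y d)
                                \<and> (\<forall>a\<in>H X Y d. - a \<in> H X Y d))"

definition valid_letter :: "('o \<Rightarrow> 'o \<Rightarrow> int \<Rightarrow> 'm set) \<Rightarrow> ('o, 'm) letter \<Rightarrow> bool" where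
  "valid_letter H w \<longleftrightarrow> lval w \<in> H (lsrc w) (ltgt w) (ldeg w)"

fun chain_from :: "'o \<Rightarrow> ('o, 'm) letter list \<Rightarrow> bool" where
  "chain_from X0 [] = True"
| "chain_from X0 (w # ws) = (lsrc w = X0 \<and> chain_from (ltgt w) ws)"

definition valid_word :: "('o \<Rightarrow> 'o \<Rightarrow> int \<Rightarrow> 'm set) \<Rightarrow> 'o \<Rightarrow> ('o, 'm) letter list \<Rightarrow> bool" where
  "valid_word H X0 ws \<longleftrightarrow> chain_from X0 ws \<and> (\<forall>w\<in>set ws. valid_letter H w)"

text \<open>A valid elementary tensor x_0 \<otimes> ... \<otimes> x_k of CC_\<bullet>[1] (cyclically composable, k \<ge> 0).\<close>
definition cyc_word :: "('o \<Rightarrow> 'o \<Rightarrow> int \<Rightarrow> 'm set) \<Rightarrow> ('o, 'm) letter list \<Rightarrow> bool" where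
  "cyc_word H X \<longleftrightarrow> X \<noteq> [] \<and> valid_word H (lsrc (hd X)) X \<and> ltgt (last X) = lsrc (hd X)"

definition endpt :: "'o \<Rightarrow> ('o, 'm) letter list \<Rightarrow> 'o" where
  "endpt X0 ws = (if ws = [] then X0 else ltgt (last ws))"

definition degsum :: "('o, 'm) letter list \<Rightarrow> int" where
  "degsum ws = sum_list (map ldeg ws)"

definition slice :: "nat \<Rightarrow> nat \<Rightarrow> 'a list \<Rightarrow> 'a list" where
  "slice a b xs = take (b - a) (drop a xs)"  \<comment> \<open>entries with indices a,...,b-1\<close>

definition sg :: "int \<Rightarrow> int" where
  "sg n = (if even n then 1 else -1)"

definition sgm :: "int \<Rightarrow> 'm::ab_group_add \<Rightarrow> 'm" where
  "sgm n v = (if even n then v else - v)"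

text \<open>A cochain is given by its components \<phi>_{X_0,...,X_k}; the component with k = 0
needs the object X_0, hence the extra argument.\<close>

type_synonym ('o, 'm) cochain = "'o \<Rightarrow> ('o, 'm) letter list \<Rightarrow> 'm"

definition is_cochain :: "('o \<Rightarrow> 'o \<Rightarrow> int \<Rightarrow> 'm::ab_group_add set) \<Rightarrow> int \<Rightarrow> ('o, 'm) cochain \<Rightarrow> bool" where
  "is_cochain H d \<phi> \<longleftrightarrow>
     (\<forall>X0 ws. valid_word H X0 ws \<longrightarrow> \<phi> X0 ws \<in> H X0 (endpt X0 ws) (d + degsum ws))
   \<and> (\<forall>X0 u v w b. valid_word H X0 (u @ w # v) \<and> b \<in> H (lsrc w) (ltgt w) (ldeg w) \<longrightarrow>
        \<phi> X0 (u @ w\<lparr>lval := lval w + b\<rparr> # v) = \<phi> X0 (u @ w # v) + \<phi> X0 (u @ w\<lparr>lval := b\<rparr> # v))"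

definition app :: "int \<Rightarrow> ('o, 'm) cochain \<Rightarrow> 'o \<Rightarrow> ('o, 'm) letter list \<Rightarrow> ('o, 'm) letter" where
  "app d \<phi> X0 ws = \<lparr>lsrc = X0, ltgt = endpt X0 ws, ldeg = d + degsum ws, lval = \<phi> X0 ws\<rparr>"

definition circ :: "int \<Rightarrow> ('o, 'm::ab_group_add) cochain \<Rightarrow> ('o, 'm) cochain \<Rightarrow> ('o, 'm) cochain" where
  "circ d\<psi> \<phi> \<psi> X0 xs =
     (\<Sum>i\<in>{0..length xs}. \<Sum>j\<in>{i..length xs}.
        sgm (d\<psi> * degsum (take i xs))
          (\<phi> X0 (take i xs @ [app d\<psi> \<psi> (endpt X0 (take i xs)) (slice i j xs)] @ drop j xs)))"

definition br :: "int \<Rightarrow> int \<Rightarrow> ('o, 'm::ab_group_add) cochain \<Rightarrow> ('o, 'm) cochain \<Rightarrow> ('o, 'm) cochain" where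
  "br d\<phi> d\<psi> \<phi> \<psi> X0 xs = circ d\<psi> \<phi> \<psi> X0 xs - sgm (d\<phi> * d\<psi>) (circ d\<phi> \<psi> \<phi> X0 xs)"

text \<open>Operators on CC_\<bullet>[1] are given on elementary tensors (words) as formal
integer combinations of elementary tensors (lists of (coefficient, word)).
The chain group is the free abelian group on words modulo the multilinearity
relations, i.e. the tensor product.\<close>

type_synonym ('o, 'm) terms = "(int \<times> ('o, 'm) letter list) list"

definition chain :: "('o, 'm) terms \<Rightarrow> (('o, 'm) letter list \<Rightarrow>\<^sub>0 int)" where
  "chain ts = (\<Sum>(c, w)\<leftarrow>ts. Poly_Mapping.single w c)"

definition scale :: "int \<Rightarrow> ('o, 'm) terms \<Rightarrow> ('o, 'm) terms" where
  "scale c ts = map (\<lambda>(c', w). (c * c', w)) ts"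

definition ext :: "(('o, 'm) letter list \<Rightarrow> ('o, 'm) terms) \<Rightarrow> ('o, 'm) terms \<Rightarrow> ('o, 'm) terms" where
  "ext f ts = concat (map (\<lambda>(c, w). scale c (f w)) ts)"

definition comm :: "int \<Rightarrow> int \<Rightarrow> (('o, 'm) letter list \<Rightarrow> ('o, 'm) terms)
                     \<Rightarrow> (('o, 'm) letter list \<Rightarrow> ('o, 'm) terms) \<Rightarrow> ('o, 'm) letter list \<Rightarrow> ('o, 'm) terms" where
  "comm df dg f g X = ext f (g X) @ scale (- sg (df * dg)) (ext g (f X))"

definition Lie :: "int \<Rightarrow> ('o, 'm) cochain \<Rightarrow> ('o, 'm) letter list \<Rightarrow> ('o, 'm) terms" where
  "Lie d \<phi> X =
     [(sg (d * degsum (take (i+1) X)),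
       take (i+1) X @ [app d \<phi> (ltgt (X!i)) (slice (i+1) (j+1) X)] @ drop (j+1) X).
        i \<leftarrow> [0..<length X], j \<leftarrow> [i..<length X]]
   @ [(sg (degsum (take (j+1) X) * degsum (drop (j+1) X)),
       app d \<phi> (ltgt (X!j)) (drop (j+1) X @ take (i+1) X) # slice (i+1) (j+1) X).
        i \<leftarrow> [0..<length X], j \<leftarrow> [i..<length X]]"

definition rho :: "int \<Rightarrow> int \<Rightarrow> ('o, 'm) cochain \<Rightarrow> ('o, 'm) cochain \<Rightarrow> ('o, 'm) letter list \<Rightarrow> ('o, 'm) terms" where
  "rho d\<phi> d\<psi> \<phi> \<psi> X =
     [(sg (d\<psi> * degsum (slice (j+1) (s+1) X) + degsum (take (j+1) X) * degsum (drop (j+1) X)),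
       app d\<phi> \<phi> (ltgt (X!j))
           (slice (j+1) (s+1) X @ [app d\<psi> \<psi> (ltgt (X!s)) (slice (s+1) (t+1) X)]
            @ drop (t+1) X @ take (i+1) X)
         # slice (i+1) (j+1) X).
        i \<leftarrow> [0..<length X], j \<leftarrow> [i..<length X], s \<leftarrow> [j..<length X], t \<leftarrow> [s..<length X]]"

inductive_set tensor_rel :: "('o \<Rightarrow> 'o \<Rightarrow> int \<Rightarrow> 'm::ab_group_add set) \<Rightarrow> (('o, 'm) letter list \<Rightarrow>\<^sub>0 int) set"
  for H where
  gen: "cyc_word H (u @ w # v) \<Longrightarrow> b \<in> H (lsrc w) (ltgt w) (ldeg w) \<Longrightarrow>
        Poly_Mapping.single (u @ w\<lparr>lval := lval w + b\<rparr> # v) 1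
          - Poly_Mapping.single (u @ w # v) 1 - Poly_Mapping.single (u @ w\<lparr>lval := b\<rparr> # v) 1
        \<in> tensor_rel H"
| zero: "0 \<in> tensor_rel H"
| add: "x \<in> tensor_rel H \<Longrightarrow> y \<in> tensor_rel H \<Longrightarrow> x + y \<in> tensor_rel H"
| neg: "x \<in> tensor_rel H \<Longrightarrow> - x \<in> tensor_rel H"

end

theory Submission
  imports Defs "HOL-Library.Sublist"
begin

text \<open>Evaluate both sides on an elementary tensor \<open>x\<^sub>0 \<otimes> \<dots> \<otimes> x\<^sub>k\<close>. Every term is then a
  doubly nested tensor: a cochain applied to a block of consecutive letters, one of which is
  itself a cochain applied to a block, and such terms are indexed by decompositions of
  \<open>x\<^sub>1 \<dots> x\<^sub>k\<close> into consecutive blocks. On the left, multilinearity of the tensor product (the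
  relations generating \<open>tensor_rel\<close>) lets a letter carrying a bracket value be replaced by the
  signed sum of the letters carrying its terms, so that
  \<open>\<rho>\<^bsub>[\<phi>\<^sub>1,\<phi>\<^sub>2],\<psi>\<^esub>\<close> expands into \<open>\<rho>\<^bsub>\<phi>\<^sub>1\<circ>\<phi>\<^sub>2,\<psi>\<^esub>\<close> and its mirror image, and
  \<open>\<rho>\<^bsub>\<phi>\<^sub>1,[\<phi>\<^sub>2,\<psi>]\<^esub>\<close> into \<open>\<rho>\<^bsub>\<phi>\<^sub>1,\<phi>\<^sub>2\<circ>\<psi>\<^esub>\<close> and \<open>\<rho>\<^bsub>\<phi>\<^sub>1,\<psi>\<circ>\<phi>\<^sub>2\<^esub>\<close>. The terms of
  \<open>\<rho>\<^bsub>\<phi>\<^sub>1\<circ>\<phi>\<^sub>2,\<psi>\<^esub>\<close> fall into six classes according to where the \<open>\<phi>\<^sub>2\<close>-block sits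
  relative to the \<open>\<psi>\<close>-letter and to \<open>x\<^sub>0\<close>; the two commutators expand into eight classes. Each
  class is matched, by an explicit bijection of decompositions preserving signs, with a class
  on the other side, and what remains cancels exactly in the free abelian group.\<close>

section \<open>Decompositions of a list into consecutive blocks\<close>

definition decomp2 :: "'a list \<Rightarrow> ('a list \<times> 'a list) set" where
  "decomp2 Y = {(a, b). Y = a @ b}"

definition decomp3 :: "'a list \<Rightarrow> ('a list \<times> 'a list \<times> 'a list) set" where
  "decomp3 Y = {(a, b, c). Y = a @ b @ c}"

definition decomp4 :: "'a list \<Rightarrow> ('a list \<times> 'a list \<times> 'a list \<times> 'a list) set" where
  "decomp4 Y = {(a, b, c, d). Y = a @ b @ c @ d}"

definition decomp5 :: "'a list \<Rightarrow> ('a list \<times> 'a list \<times> 'a list \<times> 'a list \<times> 'a list) set" where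
  "decomp5 Y = {(a, b, c, d, e). Y = a @ b @ c @ d @ e}"

lemmas decomp_defs = decomp2_def decomp3_def decomp4_def decomp5_def

lemma finite_decomp2 [simp]: "finite (decomp2 Y)"
proof (rule finite_subset)
  show "decomp2 Y \<subseteq> set (sublists Y) \<times> set (sublists Y)"
    by (auto simp: decomp2_def sublist_append)
qed simp

lemma finite_decomp3 [simp]: "finite (decomp3 Y)"
proof (rule finite_subset)
  let ?S = "set (sublists Y)"
  show "decomp3 Y \<subseteq> ?S \<times> ?S \<times> ?S"
    by (auto simp: decomp3_def sublist_append)
qed simp

lemma finite_decomp4 [simp]: "finite (decomp4 Y)"
proof (rule finite_subset)
  let ?S = "set (sublists Y)"
  show "decomp4 Y \<subseteq> ?S \<times> ?S \<times> ?S \<times> ?S"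
    by (auto simp: decomp4_def sublist_append)
qed simp

lemma finite_decomp5 [simp]: "finite (decomp5 Y)"
proof (rule finite_subset)
  let ?S = "set (sublists Y)"
  show "decomp5 Y \<subseteq> ?S \<times> ?S \<times> ?S \<times> ?S \<times> ?S"
    by (auto simp: decomp5_def sublist_append)
qed simp

lemma append_eq_append_Cons_cases:
  assumes "p @ q = x @ m # y"
  shows "(\<exists>s. x = p @ s \<and> q = s @ m # y) \<or> (\<exists>s. p = x @ m # s \<and> y = s @ q)"
proof -
  from assms obtain us where "(p = x @ us \<and> us @ q = m # y) \<or> (p @ us = x \<and> q = us @ m # y)"
    by (auto simp: append_eq_append_conv2)
  then show ?thesis
    by (cases us) auto
qed

lemma sum_decomp2_append_Cons:
  "(\<Sum>(p, q)\<in>decomp2 (x @ m # y). f p q)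
     = (\<Sum>(p, q)\<in>decomp2 x. f p (q @ m # y)) + (\<Sum>(p, q)\<in>decomp2 y. f (x @ m # p) q)"
proof -
  let ?g1 = "\<lambda>(p, q). (p, q @ m # y)" and ?g2 = "\<lambda>(p, q). (x @ m # p, q)"
  have split: "decomp2 (x @ m # y) = ?g1 ` decomp2 x \<union> ?g2 ` decomp2 y"
  proof
    show "decomp2 (x @ m # y) \<subseteq> ?g1 ` decomp2 x \<union> ?g2 ` decomp2 y"
    proof
      fix z assume "z \<in> decomp2 (x @ m # y)"
      then obtain p q where z: "z = (p, q)" "p @ q = x @ m # y"
        by (auto simp: decomp2_def)
      from append_eq_append_Cons_cases[OF z(2)] show "z \<in> ?g1 ` decomp2 x \<union> ?g2 ` decomp2 y"
        by (auto simp: decomp2_def z(1) image_iff)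
    qed
  qed (auto simp: decomp2_def)
  have disjoint: "?g1 ` decomp2 x \<inter> ?g2 ` decomp2 y = {}"
    by (auto simp: decomp2_def dest: arg_cong[of _ _ length])
  have inj1: "inj_on ?g1 (decomp2 x)" and inj2: "inj_on ?g2 (decomp2 y)"
    by (auto simp: inj_on_def decomp2_def)
  show ?thesis
    unfolding split
    apply (subst sum.union_disjoint)
    using disjoint apply (auto simp: finite_imageI)[3]
    apply (subst sum.reindex[OF inj1], subst sum.reindex[OF inj2])
    apply (simp add: case_prod_beta)
    done
qed

lemma sum_decomp3_nested:
  "(\<Sum>(a, b, c)\<in>decomp3 Y. f a b c) = (\<Sum>(a, r)\<in>decomp2 Y. \<Sum>(b, c)\<in>decomp2 r. f a b c)"
  by (simp add: sum.Sigma split_def)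
     (rule sum.reindex_bij_witness[where i="\<lambda>((a, r), (b, c)). (a, b, c)"
        and j="\<lambda>(a, b, c). ((a, b @ c), (b, c))"]; auto simp: decomp2_def decomp3_def)

lemma sum_decomp4_nested:
  "(\<Sum>(a, b, c, d)\<in>decomp4 Y. f a b c d) = (\<Sum>(a, r)\<in>decomp2 Y. \<Sum>(b, c, d)\<in>decomp3 r. f a b c d)"
  by (simp add: sum.Sigma split_def)
     (rule sum.reindex_bij_witness[where i="\<lambda>((a, r), (b, c, d)). (a, b, c, d)"
        and j="\<lambda>(a, b, c, d). ((a, b @ c @ d), (b, c, d))"]; auto simp: decomp2_def decomp3_def decomp4_def)

lemma sum_decomp5_nested:
  "(\<Sum>(a, b, c, d, e)\<in>decomp5 Y. f a b c d e)
     = (\<Sum>(a, r)\<in>decomp2 Y. \<Sum>(b, c, d, e)\<in>decomp4 r. f a b c d e)"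
  by (simp add: sum.Sigma split_def)
     (rule sum.reindex_bij_witness[where i="\<lambda>((a, r), (b, c, d, e)). (a, b, c, d, e)"
        and j="\<lambda>(a, b, c, d, e). ((a, b @ c @ d @ e), (b, c, d, e))"]; auto simp: decomp2_def decomp4_def decomp5_def)

lemma sum_decomp3_append_Cons:
  "(\<Sum>(p, q, r)\<in>decomp3 (x @ m # y). f p q r)
     = (\<Sum>(p, q, r)\<in>decomp3 x. f p q (r @ m # y))
     + (\<Sum>(p, q1)\<in>decomp2 x. \<Sum>(q2, r)\<in>decomp2 y. f p (q1 @ m # q2) r)
     + (\<Sum>(p, q, r)\<in>decomp3 y. f (x @ m # p) q r)"
  by (simp only: sum_decomp3_nested sum_decomp2_append_Cons) (simp add: split_def sum.distrib add.assoc)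

lemma sum_decomp4_append_Cons:
  "(\<Sum>(a, b, c, d)\<in>decomp4 (x @ m # y). f a b c d)
     = (\<Sum>(a, b, c, p)\<in>decomp4 x. f a b c (p @ m # y))
     + (\<Sum>(a, b, p)\<in>decomp3 x. \<Sum>(q, d)\<in>decomp2 y. f a b (p @ m # q) d)
     + (\<Sum>(a, p)\<in>decomp2 x. \<Sum>(q, c, d)\<in>decomp3 y. f a (p @ m # q) c d)
     + (\<Sum>(q, b, c, d)\<in>decomp4 y. f (x @ m # q) b c d)"
  by (simp only: sum_decomp4_nested sum_decomp2_append_Cons sum_decomp3_append_Cons,
      simp only: sum_decomp3_nested) (simp add: split_def sum.distrib add.assoc)

lemma sum_decomp5_append_Cons:
  "(\<Sum>(a, b, c, d, e)\<in>decomp5 (x @ m # y). f a b c d e)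
     = (\<Sum>(a, b, c, d, p)\<in>decomp5 x. f a b c d (p @ m # y))
     + (\<Sum>(a, b, c, p)\<in>decomp4 x. \<Sum>(q, e)\<in>decomp2 y. f a b c (p @ m # q) e)
     + (\<Sum>(a, b, p)\<in>decomp3 x. \<Sum>(q, d, e)\<in>decomp3 y. f a b (p @ m # q) d e)
     + (\<Sum>(a, p)\<in>decomp2 x. \<Sum>(q, c, d, e)\<in>decomp4 y. f a (p @ m # q) c d e)
     + (\<Sum>(q, b, c, d, e)\<in>decomp5 y. f (x @ m # q) b c d e)"
  by (simp only: sum_decomp5_nested sum_decomp2_append_Cons sum_decomp4_append_Cons,
      simp only: sum_decomp4_nested sum_decomp3_nested) (simp add: split_def sum.distrib add.assoc)

lemma take_drop_append_drop: "a \<le> b \<Longrightarrow> take (b - a) (drop a Y) @ drop b Y = drop a Y"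
  by (metis add.commute append_take_drop_id drop_drop le_add_diff_inverse2)

lemma sum_index_pairs_decomp3:
  "(\<Sum>i<Suc (length Y). \<Sum>j\<in>{i..<Suc (length Y)}. g i j)
     = (\<Sum>(a, b, c)\<in>decomp3 Y. g (length a) (length a + length b))"
proof -
  have "(\<Sum>i<Suc (length Y). \<Sum>j\<in>{i..<Suc (length Y)}. g i j)
      = (\<Sum>(i, j)\<in>(SIGMA i:{..<Suc (length Y)}. {i..<Suc (length Y)}). g i j)"
    by (rule sum.Sigma) auto
  also have "\<dots> = (\<Sum>(a, b, c)\<in>decomp3 Y. g (length a) (length a + length b))"
    by (rule sum.reindex_bij_witness[where i="\<lambda>(a, b, c). (length a, length a + length b)"
          and j="\<lambda>(i, j). (take i Y, take (j - i) (drop i Y), drop j Y)"])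
       (auto simp: decomp3_def min_def take_drop_append_drop intro!: arg_cong2[where f=g])
  finally show ?thesis .
qed

lemma sum_index_pairs_decomp3_atMost:
  "(\<Sum>i\<in>{0..length Y}. \<Sum>j\<in>{i..length Y}. g i j)
     = (\<Sum>(a, b, c)\<in>decomp3 Y. g (length a) (length a + length b))"
  using sum_index_pairs_decomp3[of _ Y]
  by (simp add: atLeast0AtMost lessThan_Suc_atMost atLeastLessThanSuc_atLeastAtMost)

lemma sum_index_quadruples_decomp5:
  "(\<Sum>i<Suc (length Y). \<Sum>j\<in>{i..<Suc (length Y)}. \<Sum>s\<in>{j..<Suc (length Y)}. \<Sum>t\<in>{s..<Suc (length Y)}. g i j s t)
     = (\<Sum>(a, b, c, d, e)\<in>decomp5 Y. g (length a) (length a + length b)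
          (length a + length b + length c) (length a + length b + length c + length d))"
proof -
  have flatten: "(\<Sum>i<n. \<Sum>j\<in>{i..<n}. \<Sum>s\<in>{j..<n}. \<Sum>t\<in>{s..<n}. g i j s t)
      = (\<Sum>(i, j, s, t)\<in>(SIGMA i:{..<n}. SIGMA j:{i..<n}. SIGMA s:{j..<n}. {s..<n}). g i j s t)"
    for n :: nat
    by (simp add: sum.Sigma)
  show ?thesis
    unfolding flatten
    by (rule sum.reindex_bij_witness[where
          i="\<lambda>(a, b, c, d, e). (length a, length a + length b, length a + length b + length c,
                                 length a + length b + length c + length d)"
          and j="\<lambda>(i, j, s, t). (take i Y, take (j - i) (drop i Y), take (s - j) (drop j Y),
                                 take (t - s) (drop s Y), drop t Y)"])
       (auto simp: decomp5_def take_drop_append_drop)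
qed

lemma degsum_Nil [simp]: "degsum [] = 0"
  by (simp add: degsum_def)

lemma degsum_Cons [simp]: "degsum (x # xs) = ldeg x + degsum xs"
  by (simp add: degsum_def)

lemma degsum_append [simp]: "degsum (xs @ ys) = degsum xs + degsum ys"
  by (simp add: degsum_def)

lemma endpt_Nil [simp]: "endpt X0 [] = X0"
  by (simp add: endpt_def)

lemma endpt_Cons [simp]: "endpt X0 (w # ws) = endpt (ltgt w) ws"
  by (simp add: endpt_def)

lemma endpt_append [simp]: "endpt X0 (xs @ ys) = endpt (endpt X0 xs) ys"
  by (simp add: endpt_def)

lemma valid_word_Nil [simp]: "valid_word H X0 []"
  by (simp add: valid_word_def)

lemma valid_word_Cons [simp]:
  "valid_word H X0 (w # ws) \<longleftrightarrow> lsrc w = X0 \<and> valid_letter H w \<and> valid_word H (ltgt w) ws"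
  by (auto simp: valid_word_def)

lemma valid_word_append [simp]:
  "valid_word H X0 (xs @ ys) \<longleftrightarrow> valid_word H X0 xs \<and> valid_word H (endpt X0 xs) ys"
  by (induct xs arbitrary: X0) auto

lemma lsrc_app [simp]: "lsrc (app d \<phi> X0 ws) = X0"
  by (simp add: app_def)

lemma ltgt_app [simp]: "ltgt (app d \<phi> X0 ws) = endpt X0 ws"
  by (simp add: app_def)

lemma ldeg_app [simp]: "ldeg (app d \<phi> X0 ws) = d + degsum ws"
  by (simp add: app_def)

lemma lval_app [simp]: "lval (app d \<phi> X0 ws) = \<phi> X0 ws"
  by (simp add: app_def)

lemma app_update_lval:
  "endpt X0 ws = endpt X0 zs \<Longrightarrow> d' + degsum ws = d + degsum zs
    \<Longrightarrow> (app d \<chi> X0 zs)\<lparr>lval := \<phi> X0 ws\<rparr> = app d' \<phi> X0 ws"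
  by (simp add: app_def)

lemma cyc_word_ConsD:
  assumes "cyc_word H (x0 # Y)"
  shows "valid_letter H x0" "valid_word H (ltgt x0) Y" "endpt (ltgt x0) Y = lsrc x0"
  using assms
  by (auto simp: cyc_word_def valid_word_def[symmetric] endpt_def last_ConsR split: if_splits)

lemma valid_letter_app: "is_cochain H d \<phi> \<Longrightarrow> valid_word H X0 ws \<Longrightarrow> valid_letter H (app d \<phi> X0 ws)"
  by (simp add: is_cochain_def valid_letter_def)

lemma valid_word_insert_app:
  "is_cochain H d \<phi> \<Longrightarrow> valid_word H X0 (p @ m @ r) \<Longrightarrow> valid_word H X0 (p @ app d \<phi> (endpt X0 p) m # r)"
  by (simp add: valid_letter_app)

lemma cochain_value_in:
  "is_cochain H d \<phi> \<Longrightarrow> valid_word H X0 ws \<Longrightarrow> \<phi> X0 ws \<in> H X0 (endpt X0 ws) (d + degsum ws)"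
  by (simp add: is_cochain_def)

definition last_tgt :: "('o, 'm) letter list \<Rightarrow> 'o" where
  "last_tgt xs = ltgt (last xs)"

lemma last_tgt_Cons: "last_tgt (w # xs) = endpt (ltgt w) xs"
  by (simp add: last_tgt_def endpt_def)

lemma endpt_last_tgt [simp]: "endpt (last_tgt (w # xs)) ys = last_tgt (w # xs @ ys)"
  by (simp add: endpt_def last_tgt_def)

lemma nth_Cons_append_length: "(w # xs @ ys) ! length xs = last (w # xs)"
  by (induct xs arbitrary: w) (auto simp: nth_append)

lemma sgm_add: "sgm k (x + y) = sgm k x + sgm k y"
  by (simp add: sgm_def)

lemma sgm_diff: "sgm k (x - y) = sgm k x - sgm k y"
  by (simp add: sgm_def)

lemma sgm_sum: "sgm k (sum f A) = (\<Sum>x\<in>A. sgm k (f x))"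
  by (simp add: sgm_def sum_negf)

lemma sgm_sgm: "sgm k (sgm l x) = sgm (k + l) x"
  by (simp add: sgm_def)

lemma uminus_sgm: "- sgm k x = sgm (k + 1) x"
  by (simp add: sgm_def)

lemma uminus_sg: "- sg k = sg (k + 1)"
  by (simp add: sg_def)

type_synonym ('o, 'm) free_chain = "('o, 'm) letter list \<Rightarrow>\<^sub>0 int"

definition tensor :: "('o, 'm) letter list \<Rightarrow> ('o, 'm) free_chain" where
  "tensor w = Poly_Mapping.single w 1"

lemma sgm_tensor_cong: "w = w' \<Longrightarrow> even k \<longleftrightarrow> even k' \<Longrightarrow> sgm k (tensor w) = sgm k' (tensor w')"
  by (simp add: sgm_def)

lemma single_sg: "Poly_Mapping.single w (sg k) = sgm k (tensor w)"
  by (simp add: sg_def sgm_def tensor_def single_uminus)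

lemma chain_conv_sum_list: "chain ts = sum_list (map (\<lambda>t. Poly_Mapping.single (snd t) (fst t)) ts)"
  by (simp add: chain_def split_def)

lemma chain_scale_sg: "chain (scale (sg k) ts) = sgm k (chain ts)"
  by (induct ts) (auto simp: chain_def scale_def sg_def sgm_def single_uminus)

lemma chain_ext: "chain (ext f ts) = sum_list (map (\<lambda>t. chain (scale (fst t) (f (snd t)))) ts)"
  by (induct ts) (auto simp: ext_def chain_def split_def)

lemma chain_comm:
  "chain (comm df dg f g X) = chain (ext f (g X)) - sgm (df * dg) (chain (ext g (f X)))"
  by (simp add: comm_def chain_def uminus_sg chain_scale_sg[unfolded chain_def] sgm_def)

section \<open>\<open>\<rho>\<close> and \<open>\<L>\<close> as sums over decompositions\<close>

lemma sum_list_map_concat: "sum_list (map f (concat xss)) = sum_list (map (\<lambda>xs. sum_list (map f xs)) xss)"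
  by (induct xss) auto

lemma sum_list_concat: "sum_list (concat xss) = sum_list (map sum_list xss)"
  by (induct xss) auto

lemma sum_list_rho:
  "sum_list (map (\<lambda>t. G (fst t) (snd t)) (rho d\<phi> d\<psi> \<phi> \<psi> (x0 # Y)))
     = (\<Sum>(u, v, c1, c2, c3)\<in>decomp5 Y.
          G (sg (d\<psi> * degsum c1 + degsum (x0 # u @ v) * degsum (c1 @ c2 @ c3)))
            (app d\<phi> \<phi> (last_tgt (x0 # u @ v))
               (c1 @ app d\<psi> \<psi> (last_tgt (x0 # u @ v @ c1)) c2 # c3 @ x0 # u) # v))"
proof -
  have nth2: "(x0 # a @ b @ r) ! (length a + length b) = last (x0 # a @ b)" for a b r
    using nth_Cons_append_length[of x0 "a @ b" r] by simp
  have nth3: "(x0 # a @ b @ c @ r) ! (length a + length b + length c) = last (x0 # a @ b @ c)" for a b c r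
    using nth_Cons_append_length[of x0 "a @ b @ c" r] by (simp add: add.assoc)
  show ?thesis
    unfolding rho_def
    apply (simp only: sum_list_map_concat sum_list_concat map_concat map_map o_def
        interv_sum_list_conv_sum_set_nat set_upt fst_conv snd_conv length_Cons flip: lessThan_atLeast0)
    apply (subst sum_index_quadruples_decomp5)
    apply (rule sum.cong[OF refl])
    apply (clarsimp simp: decomp5_def)
    apply (simp only: nth2 nth3 flip: last_tgt_def)
    apply (simp add: slice_def)
    done
qed

lemma sum_list_Lie:
  "sum_list (map (\<lambda>t. G (fst t) (snd t)) (Lie d \<phi> (x0 # Y)))
     = (\<Sum>(x, y, z)\<in>decomp3 Y. G (sg (d * degsum (x0 # x)))
          ((x0 # x) @ app d \<phi> (last_tgt (x0 # x)) y # z))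
     + (\<Sum>(x, y, z)\<in>decomp3 Y. G (sg (degsum (x0 # x @ y) * degsum z))
          (app d \<phi> (last_tgt (x0 # x @ y)) (z @ x0 # x) # y))"
proof -
  have nth1: "(x0 # a @ r) ! length a = last (x0 # a)" for a r
    by (rule nth_Cons_append_length)
  have nth2: "(x0 # a @ b @ r) ! (length a + length b) = last (x0 # a @ b)" for a b r
    using nth_Cons_append_length[of x0 "a @ b" r] by simp
  show ?thesis
    unfolding Lie_def
    apply (simp only: sum_list_map_concat sum_list_concat map_concat map_map o_def
        interv_sum_list_conv_sum_set_nat set_upt fst_conv snd_conv map_append sum_list_append
        length_Cons flip: lessThan_atLeast0)
    apply (subst sum_index_pairs_decomp3)+
    apply (rule arg_cong2[where f="(+)"]; rule sum.cong[OF refl];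
        clarsimp simp: decomp3_def; simp only: nth1 nth2 flip: last_tgt_def; simp add: slice_def)
    done
qed

abbreviation rho_sign :: "int \<Rightarrow> ('o, 'm) letter \<Rightarrow> ('o, 'm) letter list \<Rightarrow> ('o, 'm) letter list
    \<Rightarrow> ('o, 'm) letter list \<Rightarrow> ('o, 'm) letter list \<Rightarrow> ('o, 'm) letter list \<Rightarrow> int" where
  "rho_sign d x0 u v c1 c2 c3 \<equiv> d * degsum c1 + degsum (x0 # u @ v) * degsum (c1 @ c2 @ c3)"

text \<open>For \<open>X = x\<^sub>0 # u @ v @ c1 @ c2 @ c3\<close> this is the term
  \<open>\<phi>(c1, \<psi>(c2), c3, x\<^sub>0, u) \<otimes> v\<close> of \<open>\<rho>\<^bsub>\<phi>,\<psi>\<^esub>(X)\<close>.\<close>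
definition rho_term :: "int \<Rightarrow> ('o, 'm) cochain \<Rightarrow> int \<Rightarrow> ('o, 'm) cochain \<Rightarrow> ('o, 'm) letter
    \<Rightarrow> ('o, 'm) letter list \<Rightarrow> ('o, 'm) letter list \<Rightarrow> ('o, 'm) letter list
    \<Rightarrow> ('o, 'm) letter list \<Rightarrow> ('o, 'm) letter list \<Rightarrow> ('o, 'm) free_chain" where
  "rho_term d\<phi> \<phi> d\<psi> \<psi> x0 u v c1 c2 c3 =
     sgm (rho_sign d\<psi> x0 u v c1 c2 c3)
       (tensor (app d\<phi> \<phi> (last_tgt (x0 # u @ v))
                  (c1 @ app d\<psi> \<psi> (last_tgt (x0 # u @ v @ c1)) c2 # c3 @ x0 # u) # v))"

definition lie_term_inner :: "int \<Rightarrow> ('o, 'm) cochain \<Rightarrow> ('o, 'm) letter \<Rightarrow> ('o, 'm) letter list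
    \<Rightarrow> ('o, 'm) letter list \<Rightarrow> ('o, 'm) letter list \<Rightarrow> ('o, 'm) free_chain" where
  "lie_term_inner d \<phi> x0 x y z =
     sgm (d * degsum (x0 # x)) (tensor ((x0 # x) @ app d \<phi> (last_tgt (x0 # x)) y # z))"

definition lie_term_wrap :: "int \<Rightarrow> ('o, 'm) cochain \<Rightarrow> ('o, 'm) letter \<Rightarrow> ('o, 'm) letter list
    \<Rightarrow> ('o, 'm) letter list \<Rightarrow> ('o, 'm) letter list \<Rightarrow> ('o, 'm) free_chain" where
  "lie_term_wrap d \<phi> x0 x y z =
     sgm (degsum (x0 # x @ y) * degsum z) (tensor (app d \<phi> (last_tgt (x0 # x @ y)) (z @ x0 # x) # y))"

lemma chain_rho:
  "chain (rho d\<phi> d\<psi> \<phi> \<psi> (x0 # Y))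
     = (\<Sum>(u, v, c1, c2, c3)\<in>decomp5 Y. rho_term d\<phi> \<phi> d\<psi> \<psi> x0 u v c1 c2 c3)"
  unfolding chain_conv_sum_list
  using sum_list_rho[where G="\<lambda>c w. Poly_Mapping.single w c"]
  by (simp add: single_sg rho_term_def)

lemma chain_Lie:
  "chain (Lie d \<phi> (x0 # Y))
     = (\<Sum>(x, y, z)\<in>decomp3 Y. lie_term_inner d \<phi> x0 x y z) + (\<Sum>(x, y, z)\<in>decomp3 Y. lie_term_wrap d \<phi> x0 x y z)"
  unfolding chain_conv_sum_list
  using sum_list_Lie[where G="\<lambda>c w. Poly_Mapping.single w c"]
  by (simp add: single_sg lie_term_inner_def lie_term_wrap_def)

lemma chain_ext_rho:
  "chain (ext f (rho d\<phi> d\<psi> \<phi> \<psi> (x0 # Y)))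
     = (\<Sum>(u, v, c1, c2, c3)\<in>decomp5 Y.
          sgm (d\<psi> * degsum c1 + degsum (x0 # u @ v) * degsum (c1 @ c2 @ c3))
            (chain (f (app d\<phi> \<phi> (last_tgt (x0 # u @ v))
                         (c1 @ app d\<psi> \<psi> (last_tgt (x0 # u @ v @ c1)) c2 # c3 @ x0 # u) # v))))"
  unfolding chain_ext
  using sum_list_rho[where G="\<lambda>c w. chain (scale c (f w))"]
  by (simp add: chain_scale_sg)

lemma chain_ext_Lie:
  "chain (ext f (Lie d \<phi> (x0 # Y)))
     = (\<Sum>(x, y, z)\<in>decomp3 Y. sgm (d * degsum (x0 # x))
          (chain (f ((x0 # x) @ app d \<phi> (last_tgt (x0 # x)) y # z))))
     + (\<Sum>(x, y, z)\<in>decomp3 Y. sgm (degsum (x0 # x @ y) * degsum z)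
          (chain (f (app d \<phi> (last_tgt (x0 # x @ y)) (z @ x0 # x) # y))))"
  unfolding chain_ext
  using sum_list_Lie[where G="\<lambda>c w. chain (scale c (f w))"]
  by (simp add: chain_scale_sg)

section \<open>Doubly nested tensors\<close>

definition circ_term :: "int \<Rightarrow> ('o, 'm) cochain \<Rightarrow> int \<Rightarrow> ('o, 'm) cochain \<Rightarrow> 'o
    \<Rightarrow> ('o, 'm) letter list \<Rightarrow> ('o, 'm) letter list \<Rightarrow> ('o, 'm) letter list \<Rightarrow> ('o, 'm) letter list
    \<Rightarrow> ('o, 'm) free_chain" where
  "circ_term d\<phi> \<phi> d\<chi> \<chi> X0 v p m r =
     sgm (d\<chi> * degsum p) (tensor (app d\<phi> \<phi> X0 (p @ app d\<chi> \<chi> (endpt X0 p) m # r) # v))"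

text \<open>The terms of \<open>(\<phi> \<circ> \<chi>)(Z)\<close>, each placed as a letter into the context \<open>K\<close>.\<close>
definition circ_chain :: "int \<Rightarrow> ('o, 'm) cochain \<Rightarrow> int \<Rightarrow> ('o, 'm) cochain \<Rightarrow> 'o
    \<Rightarrow> ('o, 'm) letter list \<Rightarrow> (('o, 'm) letter \<Rightarrow> ('o, 'm) letter list) \<Rightarrow> ('o, 'm) free_chain" where
  "circ_chain d\<phi> \<phi> d\<chi> \<chi> X0 Z K =
     (\<Sum>(p, m, r)\<in>decomp3 Z. sgm (d\<chi> * degsum p) (tensor (K (app d\<phi> \<phi> X0 (p @ app d\<chi> \<chi> (endpt X0 p) m # r)))))"

context
  fixes d\<phi> :: int and \<phi> :: "('o, 'm) cochain" and d\<chi> :: int and \<chi> :: "('o, 'm) cochain"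
    and d\<psi> :: int and \<psi> :: "('o, 'm) cochain" and x0 :: "('o, 'm) letter" and Y :: "('o, 'm) letter list"
begin

definition "rho_circ_outer =
  (\<Sum>(u, v, c1, c2, c3)\<in>decomp5 Y. sgm (rho_sign d\<psi> x0 u v c1 c2 c3)
     (circ_chain d\<phi> \<phi> d\<chi> \<chi> (last_tgt (x0 # u @ v))
        (c1 @ app d\<psi> \<psi> (last_tgt (x0 # u @ v @ c1)) c2 # c3 @ x0 # u) (\<lambda>L. L # v)))"

text \<open>The six parts of \<open>\<rho>\<^bsub>\<phi>\<circ>\<chi>,\<psi>\<^esub>\<close>: the \<open>\<phi>\<close>-argument is
  \<open>c1 \<psi>(c2) c3 x\<^sub>0 u\<close>, and the \<open>\<chi>\<close>-block lies in \<open>c1\<close>, covers \<open>\<psi>(c2)\<close>, covers \<open>\<psi>(c2)\<close> and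
  \<open>x\<^sub>0\<close>, lies in \<open>c3\<close>, covers \<open>x\<^sub>0\<close>, or lies in \<open>u\<close>.\<close>

definition "outer_in_c1 =
  (\<Sum>(u, v, c1, c2, c3)\<in>decomp5 Y. sgm (rho_sign d\<psi> x0 u v c1 c2 c3)
     (\<Sum>(p, m, r)\<in>decomp3 c1. circ_term d\<phi> \<phi> d\<chi> \<chi> (last_tgt (x0 # u @ v)) v p m
        (r @ app d\<psi> \<psi> (last_tgt (x0 # u @ v @ c1)) c2 # c3 @ x0 # u)))"

definition "outer_over_psi =
  (\<Sum>(u, v, c1, c2, c3)\<in>decomp5 Y. sgm (rho_sign d\<psi> x0 u v c1 c2 c3)
     (\<Sum>(p, m)\<in>decomp2 c1. \<Sum>(s, t)\<in>decomp2 c3. circ_term d\<phi> \<phi> d\<chi> \<chi> (last_tgt (x0 # u @ v)) v p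
        (m @ app d\<psi> \<psi> (last_tgt (x0 # u @ v @ c1)) c2 # s) (t @ x0 # u)))"

definition "outer_over_psi_x0 =
  (\<Sum>(u, v, c1, c2, c3)\<in>decomp5 Y. sgm (rho_sign d\<psi> x0 u v c1 c2 c3)
     (\<Sum>(p, m)\<in>decomp2 c1. \<Sum>(s, t)\<in>decomp2 u. circ_term d\<phi> \<phi> d\<chi> \<chi> (last_tgt (x0 # u @ v)) v p
        (m @ app d\<psi> \<psi> (last_tgt (x0 # u @ v @ c1)) c2 # c3 @ x0 # s) t))"

definition "outer_in_c3 =
  (\<Sum>(u, v, c1, c2, c3)\<in>decomp5 Y. sgm (rho_sign d\<psi> x0 u v c1 c2 c3)
     (\<Sum>(p, m, r)\<in>decomp3 c3. circ_term d\<phi> \<phi> d\<chi> \<chi> (last_tgt (x0 # u @ v)) v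
        (c1 @ app d\<psi> \<psi> (last_tgt (x0 # u @ v @ c1)) c2 # p) m (r @ x0 # u)))"

definition "outer_over_x0 =
  (\<Sum>(u, v, c1, c2, c3)\<in>decomp5 Y. sgm (rho_sign d\<psi> x0 u v c1 c2 c3)
     (\<Sum>(p, m)\<in>decomp2 c3. \<Sum>(s, t)\<in>decomp2 u. circ_term d\<phi> \<phi> d\<chi> \<chi> (last_tgt (x0 # u @ v)) v
        (c1 @ app d\<psi> \<psi> (last_tgt (x0 # u @ v @ c1)) c2 # p) (m @ x0 # s) t))"

definition "outer_in_u =
  (\<Sum>(u, v, c1, c2, c3)\<in>decomp5 Y. sgm (rho_sign d\<psi> x0 u v c1 c2 c3)
     (\<Sum>(p, m, r)\<in>decomp3 u. circ_term d\<phi> \<phi> d\<chi> \<chi> (last_tgt (x0 # u @ v)) v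
        (c1 @ app d\<psi> \<psi> (last_tgt (x0 # u @ v @ c1)) c2 # c3 @ x0 # p) m r))"

lemma rho_circ_outer_split:
  "rho_circ_outer = outer_in_c1 + outer_over_psi + outer_over_psi_x0 + outer_in_c3 + outer_over_x0 + outer_in_u"
  unfolding rho_circ_outer_def outer_in_c1_def outer_over_psi_def outer_over_psi_x0_def
    outer_in_c3_def outer_over_x0_def outer_in_u_def
  apply (simp only: sum.distrib[symmetric])
  apply (rule sum.cong[OF refl])
  apply (clarsimp simp only: split_paired_all case_prod_conv)
  apply (simp only: circ_chain_def sum_decomp3_append_Cons sum_decomp2_append_Cons flip: circ_term_def)
  apply (simp add: sgm_add sum.distrib split_def)
  done

definition "rho_circ_inner =
  (\<Sum>(u, v, c1, c2, c3)\<in>decomp5 Y. sgm (rho_sign (d\<chi> + d\<psi>) x0 u v c1 c2 c3)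
     (circ_chain d\<chi> \<chi> d\<psi> \<psi> (last_tgt (x0 # u @ v @ c1)) c2
        (\<lambda>L. app d\<phi> \<phi> (last_tgt (x0 # u @ v)) (c1 @ L # c3 @ x0 # u) # v)))"

definition "rho_circ_inner_swap =
  (\<Sum>(u, v, c1, c2, c3)\<in>decomp5 Y. sgm (rho_sign (d\<chi> + d\<psi>) x0 u v c1 c2 c3)
     (circ_chain d\<psi> \<psi> d\<chi> \<chi> (last_tgt (x0 # u @ v @ c1)) c2
        (\<lambda>L. app d\<phi> \<phi> (last_tgt (x0 # u @ v)) (c1 @ L # c3 @ x0 # u) # v)))"

definition "lie_rho_inner =
  (\<Sum>(u, v, c1, c2, c3)\<in>decomp5 Y. sgm (rho_sign d\<psi> x0 u v c1 c2 c3)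
     (\<Sum>(x, y, z)\<in>decomp3 v. lie_term_inner d\<phi> \<phi>
        (app d\<chi> \<chi> (last_tgt (x0 # u @ v)) (c1 @ app d\<psi> \<psi> (last_tgt (x0 # u @ v @ c1)) c2 # c3 @ x0 # u)) x y z))"

definition "lie_rho_wrap =
  (\<Sum>(u, v, c1, c2, c3)\<in>decomp5 Y. sgm (rho_sign d\<psi> x0 u v c1 c2 c3)
     (\<Sum>(x, y, z)\<in>decomp3 v. lie_term_wrap d\<phi> \<phi>
        (app d\<chi> \<chi> (last_tgt (x0 # u @ v)) (c1 @ app d\<psi> \<psi> (last_tgt (x0 # u @ v @ c1)) c2 # c3 @ x0 # u)) x y z))"

lemma chain_ext_Lie_rho: "chain (ext (Lie d\<phi> \<phi>) (rho d\<chi> d\<psi> \<chi> \<psi> (x0 # Y))) = lie_rho_inner + lie_rho_wrap"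
  unfolding chain_ext_rho lie_rho_inner_def lie_rho_wrap_def
  apply (simp only: sum.distrib[symmetric])
  apply (rule sum.cong[OF refl])
  apply (clarsimp simp only: split_paired_all case_prod_conv)
  apply (simp only: chain_Lie sgm_add)
  done

text \<open>The letter \<open>\<phi>(y)\<close> inserted by \<open>\<L>\<^sub>\<phi>\<close> lies in the block \<open>u\<close>, \<open>v\<close>, \<open>c1\<close>, \<open>c2\<close> or \<open>c3\<close>
  of the decomposition indexing \<open>\<rho>\<^bsub>\<chi>,\<psi>\<^esub>\<close>, or, when \<open>\<phi>\<close> wraps around \<open>x\<^sub>0\<close>, it is the
  new first letter.\<close>

definition "rho_lie_in_u =
  (\<Sum>(x, y, z)\<in>decomp3 Y. sgm (d\<phi> * degsum (x0 # x))
     (\<Sum>(t, v, c1, c2, c3)\<in>decomp5 z.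
        rho_term d\<chi> \<chi> d\<psi> \<psi> x0 (x @ app d\<phi> \<phi> (last_tgt (x0 # x)) y # t) v c1 c2 c3))"

definition "rho_lie_in_v =
  (\<Sum>(x, y, z)\<in>decomp3 Y. sgm (d\<phi> * degsum (x0 # x))
     (\<Sum>(u, t)\<in>decomp2 x. \<Sum>(s, c1, c2, c3)\<in>decomp4 z.
        rho_term d\<chi> \<chi> d\<psi> \<psi> x0 u (t @ app d\<phi> \<phi> (last_tgt (x0 # x)) y # s) c1 c2 c3))"

definition "rho_lie_in_c1 =
  (\<Sum>(x, y, z)\<in>decomp3 Y. sgm (d\<phi> * degsum (x0 # x))
     (\<Sum>(u, v, t)\<in>decomp3 x. \<Sum>(s, c2, c3)\<in>decomp3 z.
        rho_term d\<chi> \<chi> d\<psi> \<psi> x0 u v (t @ app d\<phi> \<phi> (last_tgt (x0 # x)) y # s) c2 c3))"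

definition "rho_lie_in_c2 =
  (\<Sum>(x, y, z)\<in>decomp3 Y. sgm (d\<phi> * degsum (x0 # x))
     (\<Sum>(u, v, c1, t)\<in>decomp4 x. \<Sum>(s, c3)\<in>decomp2 z.
        rho_term d\<chi> \<chi> d\<psi> \<psi> x0 u v c1 (t @ app d\<phi> \<phi> (last_tgt (x0 # x)) y # s) c3))"

definition "rho_lie_in_c3 =
  (\<Sum>(x, y, z)\<in>decomp3 Y. sgm (d\<phi> * degsum (x0 # x))
     (\<Sum>(u, v, c1, c2, t)\<in>decomp5 x.
        rho_term d\<chi> \<chi> d\<psi> \<psi> x0 u v c1 c2 (t @ app d\<phi> \<phi> (last_tgt (x0 # x)) y # z)))"

definition "rho_lie_wrap =
  (\<Sum>(x, y, z)\<in>decomp3 Y. sgm (degsum (x0 # x @ y) * degsum z)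
     (\<Sum>(u, v, c1, c2, c3)\<in>decomp5 y.
        rho_term d\<chi> \<chi> d\<psi> \<psi> (app d\<phi> \<phi> (last_tgt (x0 # x @ y)) (z @ x0 # x)) u v c1 c2 c3))"

lemma chain_ext_rho_Lie:
  "chain (ext (rho d\<chi> d\<psi> \<chi> \<psi>) (Lie d\<phi> \<phi> (x0 # Y)))
     = rho_lie_in_u + rho_lie_in_v + rho_lie_in_c1 + rho_lie_in_c2 + rho_lie_in_c3 + rho_lie_wrap"
  unfolding chain_ext_Lie rho_lie_in_u_def rho_lie_in_v_def rho_lie_in_c1_def rho_lie_in_c2_def
    rho_lie_in_c3_def rho_lie_wrap_def
  apply (simp only: append_Cons append_assoc chain_rho sum_decomp5_append_Cons)
  apply (simp add: sgm_add sum.distrib split_def)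
  done

end

text \<open>Each of the following identities reindexes one sum by an explicit bijection of
  decompositions; matched terms carry the same tensor, and their signs differ by an even
  integer, which is checked by linear arithmetic over the parities of the block degrees.\<close>

lemma outer_over_psi_eq:
  "outer_over_psi d\<phi> \<phi> d\<chi> \<chi> d\<psi> \<psi> x0 Y
     = rho_circ_inner d\<phi> \<phi> d\<chi> \<chi> d\<psi> \<psi> x0 Y"
  unfolding outer_over_psi_def rho_circ_inner_def circ_chain_def circ_term_def
  apply (simp only: sgm_sum sgm_sgm)
  apply (simp add: split_def sum.Sigma sgm_sum sgm_sgm)
  apply (rule sum.reindex_bij_witness[where
      j="\<lambda>((u,v,c1,c2,c3),((p,m),(s,t))). ((u,v,p,m@c2@s,t),(m,c2,s))" and
      i="\<lambda>((u,v,c1,c2,c3),(p,m,r)). ((u,v,c1@p,m,r@c3),((c1,p),(r,c3)))"])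
  apply (auto simp: decomp_defs)
  apply (rule sgm_tensor_cong)
   apply (simp add: endpt_def last_tgt_def)
  apply (simp add: even_add even_mult_iff distrib_left distrib_right)
  apply argo
  done

lemma lie_rho_wrap_eq:
  "lie_rho_wrap d\<phi> \<phi> d\<chi> \<chi> d\<psi> \<psi> x0 Y
     = outer_over_psi_x0 d\<phi> \<phi> d\<chi> \<chi> d\<psi> \<psi> x0 Y"
  unfolding lie_rho_wrap_def outer_over_psi_x0_def lie_term_wrap_def circ_term_def
  apply (simp only: sgm_sum sgm_sgm)
  apply (simp add: split_def sum.Sigma sgm_sum sgm_sgm)
  apply (rule sum.reindex_bij_witness[where
      j="\<lambda>((u,v,c1,c2,c3),(x,y,z)). ((u@x, y, z@c1, c2, c3), ((z, c1),(u, x)))" and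
      i="\<lambda>((U,V,C1,C2,C3),((p,m),(s,t))). ((s, t@V@p, m, C2, C3),(t, V, p))"])
  apply (auto simp: decomp_defs)
  apply (rule sgm_tensor_cong)
   apply (simp add: endpt_def last_tgt_def)
  apply (simp add: even_add even_mult_iff distrib_left distrib_right)
  apply argo
  done

lemma lie_rho_inner_eq:
  "lie_rho_inner d\<phi> \<phi> d\<chi> \<chi> d\<psi> \<psi> x0 Y
     = sgm (d\<phi> * (d\<chi> + d\<psi>)) (rho_lie_in_v d\<phi> \<phi> d\<chi> \<chi> d\<psi> \<psi> x0 Y)"
  unfolding lie_rho_inner_def rho_lie_in_v_def lie_term_inner_def rho_term_def
  apply (simp only: sgm_sum sgm_sgm)
  apply (simp add: split_def sum.Sigma sgm_sum sgm_sgm)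
  apply (rule sum.reindex_bij_witness[where
      j="\<lambda>((u,v,c1,c2,c3),(x,y,z)). ((u@x, y, z@c1@c2@c3), ((u,x),(z,c1,c2,c3)))" and
      i="\<lambda>((X,W,Z),((u,t),(s,c1,c2,c3))). ((u, t@W@s, c1,c2,c3),(t,W,s))"])
  apply (auto simp: decomp_defs)
  apply (rule sgm_tensor_cong)
   apply (simp add: endpt_def last_tgt_def)
  apply (simp add: even_add even_mult_iff distrib_left distrib_right)
  apply argo
  done

lemma rho_lie_in_u_eq:
  "rho_lie_in_u d\<phi> \<phi> d\<chi> \<chi> d\<psi> \<psi> x0 Y
     = sgm (d\<phi> * d\<psi>) (outer_in_u d\<chi> \<chi> d\<phi> \<phi> d\<psi> \<psi> x0 Y)"
  unfolding rho_lie_in_u_def outer_in_u_def rho_term_def circ_term_def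
  apply (simp only: sgm_sum sgm_sgm)
  apply (simp add: split_def sum.Sigma sgm_sum sgm_sgm)
  apply (rule sum.reindex_bij_witness[where
      j="\<lambda>((X,W,Z),(t,v,c1,c2,c3)). ((X@W@t, v, c1, c2, c3),(X,W,t))" and
      i="\<lambda>((U,V,C1,C2,C3),(p,m,r)). ((p,m,r@V@C1@C2@C3),(r,V,C1,C2,C3))"])
  apply (auto simp: decomp_defs)
  apply (rule sgm_tensor_cong)
   apply (simp add: endpt_def last_tgt_def)
  apply (simp add: even_add even_mult_iff distrib_left distrib_right)
  apply argo
  done

lemma rho_lie_in_c1_eq:
  "rho_lie_in_c1 d\<phi> \<phi> d\<chi> \<chi> d\<psi> \<psi> x0 Y
     = sgm (d\<phi> * d\<psi>) (outer_in_c1 d\<chi> \<chi> d\<phi> \<phi> d\<psi> \<psi> x0 Y)"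
  unfolding rho_lie_in_c1_def outer_in_c1_def rho_term_def circ_term_def
  apply (simp only: sgm_sum sgm_sgm)
  apply (simp add: split_def sum.Sigma sgm_sum sgm_sgm)
  apply (rule sum.reindex_bij_witness[where
      j="\<lambda>((X,W,Z),((u,v,t),(s,c2,c3))). ((u,v,t@W@s,c2,c3),(t,W,s))" and
      i="\<lambda>((U,V,C1,C2,C3),(p,m,r)). ((U@V@p, m, r@C2@C3),((U,V,p),(r,C2,C3)))"])
  apply (auto simp: decomp_defs)
  apply (rule sgm_tensor_cong)
   apply (simp add: endpt_def last_tgt_def)
  apply (simp add: even_add even_mult_iff distrib_left distrib_right)
  apply argo
  done

lemma rho_lie_in_c3_eq:
  "rho_lie_in_c3 d\<phi> \<phi> d\<chi> \<chi> d\<psi> \<psi> x0 Y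
     = sgm (d\<phi> * d\<psi>) (outer_in_c3 d\<chi> \<chi> d\<phi> \<phi> d\<psi> \<psi> x0 Y)"
  unfolding rho_lie_in_c3_def outer_in_c3_def rho_term_def circ_term_def
  apply (simp only: sgm_sum sgm_sgm)
  apply (simp add: split_def sum.Sigma sgm_sum sgm_sgm)
  apply (rule sum.reindex_bij_witness[where
      j="\<lambda>((X,W,Z),(u,v,c1,c2,t)). ((u,v,c1,c2,t@W@Z),(t,W,Z))" and
      i="\<lambda>((U,V,C1,C2,C3),(p,m,r)). ((U@V@C1@C2@p, m, r),(U,V,C1,C2,p))"])
  apply (auto simp: decomp_defs)
  apply (rule sgm_tensor_cong)
   apply (simp add: endpt_def last_tgt_def)
  apply (simp add: even_add even_mult_iff distrib_left distrib_right)
  apply argo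
  done

lemma rho_lie_wrap_eq:
  "rho_lie_wrap d\<phi> \<phi> d\<chi> \<chi> d\<psi> \<psi> x0 Y
     = sgm (d\<phi> * d\<psi>) (outer_over_x0 d\<chi> \<chi> d\<phi> \<phi> d\<psi> \<psi> x0 Y)"
  unfolding rho_lie_wrap_def outer_over_x0_def rho_term_def circ_term_def
  apply (simp only: sgm_sum sgm_sgm)
  apply (simp add: split_def sum.Sigma sgm_sum sgm_sgm)
  apply (rule sum.reindex_bij_witness[where
      j="\<lambda>((X,W,Z),(u,v,c1,c2,c3)). ((X@u, v, c1, c2, c3@Z),((c3,Z),(X,u)))" and
      i="\<lambda>((U,V,C1,C2,C3),((p,m),(s,t))). ((s, t@V@C1@C2@p, m),(t,V,C1,C2,p))"])
  apply (auto simp: decomp_defs)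
  apply (rule sgm_tensor_cong)
   apply (simp add: endpt_def last_tgt_def)
  apply (simp add: even_add even_mult_iff distrib_left distrib_right)
  apply argo
  done

lemma rho_lie_in_c2_eq:
  "rho_lie_in_c2 d\<phi> \<phi> d\<chi> \<chi> d\<psi> \<psi> x0 Y
     = rho_circ_inner_swap d\<chi> \<chi> d\<phi> \<phi> d\<psi> \<psi> x0 Y"
  unfolding rho_lie_in_c2_def rho_circ_inner_swap_def rho_term_def circ_chain_def
  apply (simp only: sgm_sum sgm_sgm)
  apply (simp add: split_def sum.Sigma sgm_sum sgm_sgm)
  apply (rule sum.reindex_bij_witness[where
      j="\<lambda>((X,W,Z),((u,v,c1,t),(s,c3))). ((u,v,c1,t@W@s,c3),(t,W,s))" and
      i="\<lambda>((U,V,C1,C2,C3),(p,m,r)). ((U@V@C1@p, m, r@C3),((U,V,C1,p),(r,C3)))"])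
  apply (auto simp: decomp_defs)
  apply (rule sgm_tensor_cong)
   apply (simp add: endpt_def last_tgt_def)
  apply (simp add: even_add even_mult_iff distrib_left distrib_right)
  apply argo
  done

lemma nested_terms_cancel:
  "rho_circ_outer d1 \<phi>1 d2 \<phi>2 e \<psi> x0 Y - sgm (d1 * d2) (rho_circ_outer d2 \<phi>2 d1 \<phi>1 e \<psi> x0 Y)
     - (rho_circ_inner d1 \<phi>1 d2 \<phi>2 e \<psi> x0 Y - sgm (d2 * e) (rho_circ_inner_swap d1 \<phi>1 d2 \<phi>2 e \<psi> x0 Y))
     + sgm (d1 * d2) (rho_circ_inner d2 \<phi>2 d1 \<phi>1 e \<psi> x0 Y
                      - sgm (d1 * e) (rho_circ_inner_swap d2 \<phi>2 d1 \<phi>1 e \<psi> x0 Y))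
     - (chain (comm d1 (d2 + e) (Lie d1 \<phi>1) (rho d2 e \<phi>2 \<psi>) (x0 # Y))
        - sgm (d1 * d2) (chain (comm d2 (d1 + e) (Lie d2 \<phi>2) (rho d1 e \<phi>1 \<psi>) (x0 # Y)))) = 0"
  unfolding chain_comm chain_ext_Lie_rho chain_ext_rho_Lie rho_circ_outer_split outer_over_psi_eq
    lie_rho_inner_eq lie_rho_wrap_eq rho_lie_in_u_eq rho_lie_in_c1_eq rho_lie_in_c2_eq
    rho_lie_in_c3_eq rho_lie_wrap_eq
  by (cases "even d1"; cases "even d2"; cases "even e") (simp_all add: sgm_def even_add even_mult_iff)

section \<open>Multilinearity modulo the tensor relations\<close>

lemma tensor_rel_diff: "x \<in> tensor_rel H \<Longrightarrow> y \<in> tensor_rel H \<Longrightarrow> x - y \<in> tensor_rel H"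
  using tensor_rel.add[OF _ tensor_rel.neg] by (metis diff_conv_add_uminus)

lemma tensor_rel_sum: "finite A \<Longrightarrow> (\<And>x. x \<in> A \<Longrightarrow> f x \<in> tensor_rel H) \<Longrightarrow> sum f A \<in> tensor_rel H"
  by (induct A rule: finite_induct) (auto intro: tensor_rel.zero tensor_rel.add)

lemma tensor_rel_sgm: "x \<in> tensor_rel H \<Longrightarrow> sgm k x \<in> tensor_rel H"
  by (simp add: sgm_def tensor_rel.neg)

lemma tensor_rel_combination:
  assumes "x - x' \<in> tensor_rel H" and "y - y' \<in> tensor_rel H" and "z - z' \<in> tensor_rel H"
    and "x' - y' + sgm k z' - w = 0"
  shows "x - y + sgm k z - w \<in> tensor_rel H"
proof -
  have "(x - x') - (y - y') + sgm k (z - z') \<in> tensor_rel H"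
    by (rule tensor_rel.add[OF tensor_rel_diff[OF assms(1,2)] tensor_rel_sgm[OF assms(3)]])
  moreover have "(x - x') - (y - y') + sgm k (z - z') = x - y + sgm k z - w"
    using assms(4) by (simp add: sgm_diff algebra_simps eq_diff_eq)
  ultimately show ?thesis
    by simp
qed

lemma additive_mod_sum_sgm:
  fixes f :: "'a::ab_group_add \<Rightarrow> 'b::ab_group_add"
  assumes P_0: "P 0" and P_add: "\<And>a b. P a \<Longrightarrow> P b \<Longrightarrow> P (a + b)" and P_uminus: "\<And>a. P a \<Longrightarrow> P (- a)"
    and S_0: "0 \<in> S" and S_add: "\<And>x y. x \<in> S \<Longrightarrow> y \<in> S \<Longrightarrow> x + y \<in> S"
    and S_uminus: "\<And>x. x \<in> S \<Longrightarrow> - x \<in> S"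
    and f_add: "\<And>x y. x \<in> S \<Longrightarrow> y \<in> S \<Longrightarrow> P (f (x + y) - f x - f y)"
    and "finite K" and "\<And>k. k \<in> K \<Longrightarrow> v k \<in> S"
  shows "P (f (\<Sum>k\<in>K. sgm (s k) (v k)) - (\<Sum>k\<in>K. sgm (s k) (f (v k))))"
proof -
  have P_diff: "P (a - b)" if "P a" "P b" for a b
    using P_add[OF that(1) P_uminus[OF that(2)]] by simp
  have S_sgm: "sgm k x \<in> S" if "x \<in> S" for k x
    using that S_uminus by (simp add: sgm_def)
  have S_sum: "sum g J \<in> S" if "finite J" "\<And>j. j \<in> J \<Longrightarrow> g j \<in> S" for g and J :: "'c set"
    using that by (induct J rule: finite_induct) (auto intro: S_0 S_add)
  have f_0: "P (f 0)"
    using P_uminus[OF f_add[OF S_0 S_0]] by simp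
  have f_sgm: "P (f (sgm k x) - sgm k (f x))" if x: "x \<in> S" for k x
  proof (cases "even k")
    case True
    then show ?thesis by (simp add: sgm_def P_0)
  next
    case False
    have "P (f 0 - (f (x + - x) - f x - f (- x)))"
      by (rule P_diff[OF f_0 f_add[OF x S_uminus[OF x]]])
    then show ?thesis
      using False by (simp add: sgm_def)
  qed
  show ?thesis
    using assms(8,9)
  proof (induct K rule: finite_induct)
    case empty
    then show ?case using f_0 by simp
  next
    case (insert k K)
    let ?a = "sgm (s k) (v k)" and ?b = "\<Sum>k\<in>K. sgm (s k) (v k)"
    have a: "?a \<in> S" and b: "?b \<in> S"
      using insert by (auto intro: S_sgm S_sum)
    have "P ((f (?a + ?b) - f ?a - f ?b) + (f ?a - sgm (s k) (f (v k)))
             + (f ?b - (\<Sum>k\<in>K. sgm (s k) (f (v k)))))"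
      using insert by (intro P_add f_add[OF a b] f_sgm) auto
    then show ?case
      using insert(1,2) by (simp add: algebra_simps)
  qed
qed

lemma additive_mod_sum_sgm2:
  fixes f :: "'a::ab_group_add \<Rightarrow> 'b::ab_group_add"
  assumes P_0: "P 0" and P_add: "\<And>a b. P a \<Longrightarrow> P b \<Longrightarrow> P (a + b)" and P_uminus: "\<And>a. P a \<Longrightarrow> P (- a)"
    and S_0: "0 \<in> S" and S_add: "\<And>x y. x \<in> S \<Longrightarrow> y \<in> S \<Longrightarrow> x + y \<in> S"
    and S_uminus: "\<And>x. x \<in> S \<Longrightarrow> - x \<in> S"
    and f_add: "\<And>x y. x \<in> S \<Longrightarrow> y \<in> S \<Longrightarrow> P (f (x + y) - f x - f y)"
    and "finite K" and "\<And>k. k \<in> K \<Longrightarrow> v k \<in> S"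
    and "finite L" and "\<And>l. l \<in> L \<Longrightarrow> w l \<in> S"
  shows "P (f ((\<Sum>k\<in>K. sgm (s k) (v k)) + (\<Sum>l\<in>L. sgm (t l) (w l)))
            - ((\<Sum>k\<in>K. sgm (s k) (f (v k))) + (\<Sum>l\<in>L. sgm (t l) (f (w l)))))"
proof -
  have "case_sum v w j \<in> S" if "j \<in> K <+> L" for j
    using that assms(9,11) by (auto simp: Plus_def)
  with additive_mod_sum_sgm[OF assms(1-7), of "K <+> L" "case_sum v w" "case_sum s t"] assms(8,10)
  show ?thesis
    by (simp add: sum.Plus o_def)
qed

lemma tensor_rel_letter_sum2:
  assumes "graded_homs H"
    and cyc: "\<And>x. x \<in> H (lsrc w) (ltgt w) (ldeg w) \<Longrightarrow> cyc_word H (pre @ w\<lparr>lval := x\<rparr> # post)"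
    and "finite K" and "\<And>k. k \<in> K \<Longrightarrow> v k \<in> H (lsrc w) (ltgt w) (ldeg w)"
    and "finite L" and "\<And>l. l \<in> L \<Longrightarrow> v' l \<in> H (lsrc w) (ltgt w) (ldeg w)"
  shows "tensor (pre @ w\<lparr>lval := (\<Sum>k\<in>K. sgm (s k) (v k)) + (\<Sum>l\<in>L. sgm (s' l) (v' l))\<rparr> # post)
     - ((\<Sum>k\<in>K. sgm (s k) (tensor (pre @ w\<lparr>lval := v k\<rparr> # post)))
        + (\<Sum>l\<in>L. sgm (s' l) (tensor (pre @ w\<lparr>lval := v' l\<rparr> # post)))) \<in> tensor_rel H"
proof (rule additive_mod_sum_sgm2[where P="\<lambda>z. z \<in> tensor_rel H"])
  fix x y assume x: "x \<in> H (lsrc w) (ltgt w) (ldeg w)" and y: "y \<in> H (lsrc w) (ltgt w) (ldeg w)"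
  have "Poly_Mapping.single (pre @ (w\<lparr>lval := x\<rparr>)\<lparr>lval := lval (w\<lparr>lval := x\<rparr>) + y\<rparr> # post) 1
      - Poly_Mapping.single (pre @ w\<lparr>lval := x\<rparr> # post) 1
      - Poly_Mapping.single (pre @ (w\<lparr>lval := x\<rparr>)\<lparr>lval := y\<rparr> # post) 1 \<in> tensor_rel H"
    by (rule tensor_rel.gen) (use cyc x y in auto)
  then show "tensor (pre @ w\<lparr>lval := x + y\<rparr> # post) - tensor (pre @ w\<lparr>lval := x\<rparr> # post)
      - tensor (pre @ w\<lparr>lval := y\<rparr> # post) \<in> tensor_rel H"
    by (simp add: tensor_def)
qed (use assms in \<open>auto simp: graded_homs_def intro: tensor_rel.intros\<close>)

lemma cochain_additive:
  "is_cochain H d \<phi> \<Longrightarrow> valid_word H X0 (u @ w # v) \<Longrightarrow> b \<in> H (lsrc w) (ltgt w) (ldeg w)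
    \<Longrightarrow> \<phi> X0 (u @ w\<lparr>lval := lval w + b\<rparr> # v) = \<phi> X0 (u @ w # v) + \<phi> X0 (u @ w\<lparr>lval := b\<rparr> # v)"
  unfolding is_cochain_def by blast

lemma cochain_letter_sum2:
  assumes "graded_homs H" and co: "is_cochain H d \<phi>"
    and val: "\<And>x. x \<in> H (lsrc w) (ltgt w) (ldeg w) \<Longrightarrow> valid_word H X0 (pre @ w\<lparr>lval := x\<rparr> # post)"
    and "finite K" and "\<And>k. k \<in> K \<Longrightarrow> v k \<in> H (lsrc w) (ltgt w) (ldeg w)"
    and "finite L" and "\<And>l. l \<in> L \<Longrightarrow> v' l \<in> H (lsrc w) (ltgt w) (ldeg w)"
  shows "\<phi> X0 (pre @ w\<lparr>lval := (\<Sum>k\<in>K. sgm (s k) (v k)) + (\<Sum>l\<in>L. sgm (s' l) (v' l))\<rparr> # post)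
     = (\<Sum>k\<in>K. sgm (s k) (\<phi> X0 (pre @ w\<lparr>lval := v k\<rparr> # post)))
       + (\<Sum>l\<in>L. sgm (s' l) (\<phi> X0 (pre @ w\<lparr>lval := v' l\<rparr> # post)))"
proof -
  have "\<phi> X0 (pre @ w\<lparr>lval := (\<Sum>k\<in>K. sgm (s k) (v k)) + (\<Sum>l\<in>L. sgm (s' l) (v' l))\<rparr> # post)
     - ((\<Sum>k\<in>K. sgm (s k) (\<phi> X0 (pre @ w\<lparr>lval := v k\<rparr> # post)))
       + (\<Sum>l\<in>L. sgm (s' l) (\<phi> X0 (pre @ w\<lparr>lval := v' l\<rparr> # post)))) = 0"
  proof (rule additive_mod_sum_sgm2[where P="\<lambda>z. z = 0"])
    fix x y assume x: "x \<in> H (lsrc w) (ltgt w) (ldeg w)" and y: "y \<in> H (lsrc w) (ltgt w) (ldeg w)"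
    show "\<phi> X0 (pre @ w\<lparr>lval := x + y\<rparr> # post) - \<phi> X0 (pre @ w\<lparr>lval := x\<rparr> # post)
        - \<phi> X0 (pre @ w\<lparr>lval := y\<rparr> # post) = 0"
      using cochain_additive[OF co val[OF x], of y] y by simp
  qed (use assms in \<open>auto simp: graded_homs_def\<close>)
  then show ?thesis
    by simp
qed

lemma cochain_value_insert_app:
  assumes "is_cochain H d\<phi> \<phi>" and "is_cochain H d\<chi> \<chi>" and "valid_word H X0 Z" and "(p, m, r) \<in> decomp3 Z"
  shows "\<phi> X0 (p @ app d\<chi> \<chi> (endpt X0 p) m # r) \<in> H X0 (endpt X0 Z) (d\<phi> + d\<chi> + degsum Z)"
proof -
  have Z: "Z = p @ m @ r"
    using assms(4) by (simp add: decomp3_def)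
  have "valid_word H X0 (p @ app d\<chi> \<chi> (endpt X0 p) m # r)"
    using valid_word_insert_app[OF assms(2)] assms(3) Z by simp
  from cochain_value_in[OF assms(1) this] show ?thesis
    using Z by (simp add: algebra_simps)
qed

lemma circ_decomp3:
  "circ d\<chi> \<phi> \<chi> X0 Z
     = (\<Sum>(p, m, r)\<in>decomp3 Z. sgm (d\<chi> * degsum p) (\<phi> X0 (p @ app d\<chi> \<chi> (endpt X0 p) m # r)))"
  unfolding circ_def sum_index_pairs_decomp3_atMost
  by (rule sum.cong[OF refl]) (clarsimp simp: decomp3_def slice_def)

lemma br_decomp3:
  "br d\<phi> d\<chi> \<phi> \<chi> X0 Z
     = (\<Sum>(p, m, r)\<in>decomp3 Z. sgm (d\<chi> * degsum p) (\<phi> X0 (p @ app d\<chi> \<chi> (endpt X0 p) m # r)))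
     + (\<Sum>(p, m, r)\<in>decomp3 Z. sgm (d\<phi> * d\<chi> + d\<phi> * degsum p + 1) (\<chi> X0 (p @ app d\<phi> \<phi> (endpt X0 p) m # r)))"
  unfolding br_def circ_decomp3 sgm_sum
  by (simp add: sgm_sgm split_def diff_conv_add_uminus sum_negf[symmetric] uminus_sgm add.assoc)

lemma tensor_rel_bracket_letter:
  assumes gh: "graded_homs H" and c\<phi>: "is_cochain H d\<phi> \<phi>" and c\<chi>: "is_cochain H d\<chi> \<chi>"
    and vZ: "valid_word H X0 Z"
    and cyc: "\<And>x. x \<in> H X0 (endpt X0 Z) (d\<phi> + d\<chi> + degsum Z)
                \<Longrightarrow> cyc_word H (pre @ (app (d\<phi> + d\<chi>) (br d\<phi> d\<chi> \<phi> \<chi>) X0 Z)\<lparr>lval := x\<rparr> # post)"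
  shows "tensor (pre @ app (d\<phi> + d\<chi>) (br d\<phi> d\<chi> \<phi> \<chi>) X0 Z # post)
           - (circ_chain d\<phi> \<phi> d\<chi> \<chi> X0 Z (\<lambda>L. pre @ L # post)
              - sgm (d\<phi> * d\<chi>) (circ_chain d\<chi> \<chi> d\<phi> \<phi> X0 Z (\<lambda>L. pre @ L # post)))
         \<in> tensor_rel H"
proof -
  let ?w = "app (d\<phi> + d\<chi>) (br d\<phi> d\<chi> \<phi> \<chi>) X0 Z"
  let ?s1 = "\<lambda>(p, m, r). d\<chi> * degsum p" and ?v1 = "\<lambda>(p, m, r). \<phi> X0 (p @ app d\<chi> \<chi> (endpt X0 p) m # r)"
  let ?s2 = "\<lambda>(p, m, r). d\<phi> * d\<chi> + d\<phi> * degsum p + 1"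
    and ?v2 = "\<lambda>(p, m, r). \<chi> X0 (p @ app d\<phi> \<phi> (endpt X0 p) m # r)"
  let ?val = "(\<Sum>k\<in>decomp3 Z. sgm (?s1 k) (?v1 k)) + (\<Sum>k\<in>decomp3 Z. sgm (?s2 k) (?v2 k))"
  let ?t = "\<lambda>x. tensor (pre @ ?w\<lparr>lval := x\<rparr> # post)"
  have w: "?w = ?w\<lparr>lval := ?val\<rparr>"
    by (simp add: br_decomp3 split_def app_def)
  have v1: "?v1 k \<in> H (lsrc ?w) (ltgt ?w) (ldeg ?w)" and v2: "?v2 k \<in> H (lsrc ?w) (ltgt ?w) (ldeg ?w)"
    if "k \<in> decomp3 Z" for k
    using that cochain_value_insert_app[OF c\<phi> c\<chi> vZ] cochain_value_insert_app[OF c\<chi> c\<phi> vZ]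
    by (auto simp: algebra_simps split: prod.splits)
  have split: "?t ?val - ((\<Sum>k\<in>decomp3 Z. sgm (?s1 k) (?t (?v1 k))) + (\<Sum>k\<in>decomp3 Z. sgm (?s2 k) (?t (?v2 k))))
      \<in> tensor_rel H"
    by (rule tensor_rel_letter_sum2[OF gh]) (use cyc v1 v2 in auto)
  have first: "(\<Sum>k\<in>decomp3 Z. sgm (?s1 k) (?t (?v1 k))) = circ_chain d\<phi> \<phi> d\<chi> \<chi> X0 Z (\<lambda>L. pre @ L # post)"
    unfolding circ_chain_def
    apply (rule sum.cong[OF refl])
    apply (clarsimp simp: decomp3_def)
    apply (subst app_update_lval[where d'=d\<phi>]; simp add: algebra_simps)
    done
  have second: "(\<Sum>k\<in>decomp3 Z. sgm (?s2 k) (?t (?v2 k)))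
      = - sgm (d\<phi> * d\<chi>) (circ_chain d\<chi> \<chi> d\<phi> \<phi> X0 Z (\<lambda>L. pre @ L # post))"
    unfolding circ_chain_def sgm_sum sum_negf[symmetric]
    apply (rule sum.cong[OF refl])
    apply (clarsimp simp: decomp3_def)
    apply (subst app_update_lval[where d'=d\<chi>]; simp add: algebra_simps uminus_sgm sgm_sgm)
    done
  show ?thesis
    using split unfolding w[symmetric] first second by (simp only: diff_conv_add_uminus)
qed

text \<open>Here the bracket letter sits inside the argument of \<open>\<phi>\<close>: additivity of \<open>\<phi>\<close> in that
  slot turns the expansion of the bracket into one of the \<open>\<phi>\<close>-letter, to which multilinearity
  of the tensor product then applies.\<close>
lemma tensor_rel_bracket_in_letter:
  assumes gh: "graded_homs H" and c\<phi>: "is_cochain H d\<phi> \<phi>" and c\<chi>: "is_cochain H d\<chi> \<chi>"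
    and c\<psi>: "is_cochain H d\<psi> \<psi>" and vc2: "valid_word H O2 c2"
    and vO: "\<And>x. x \<in> H O2 (endpt O2 c2) (d\<chi> + d\<psi> + degsum c2)
               \<Longrightarrow> valid_word H O1 (c1 @ (app (d\<chi> + d\<psi>) (br d\<chi> d\<psi> \<chi> \<psi>) O2 c2)\<lparr>lval := x\<rparr> # c3)"
    and cyc: "\<And>y. y \<in> H O1 (endpt O1 (c1 @ app (d\<chi> + d\<psi>) (br d\<chi> d\<psi> \<chi> \<psi>) O2 c2 # c3))
                       (d\<phi> + degsum (c1 @ app (d\<chi> + d\<psi>) (br d\<chi> d\<psi> \<chi> \<psi>) O2 c2 # c3))
                \<Longrightarrow> cyc_word H (pre @ (app d\<phi> \<phi> O1 (c1 @ app (d\<chi> + d\<psi>) (br d\<chi> d\<psi> \<chi> \<psi>) O2 c2 # c3))\<lparr>lval := y\<rparr> # post)"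
  shows "tensor (pre @ app d\<phi> \<phi> O1 (c1 @ app (d\<chi> + d\<psi>) (br d\<chi> d\<psi> \<chi> \<psi>) O2 c2 # c3) # post)
           - (circ_chain d\<chi> \<chi> d\<psi> \<psi> O2 c2 (\<lambda>L. pre @ app d\<phi> \<phi> O1 (c1 @ L # c3) # post)
              - sgm (d\<chi> * d\<psi>) (circ_chain d\<psi> \<psi> d\<chi> \<chi> O2 c2 (\<lambda>L. pre @ app d\<phi> \<phi> O1 (c1 @ L # c3) # post)))
         \<in> tensor_rel H"
proof -
  let ?B = "app (d\<chi> + d\<psi>) (br d\<chi> d\<psi> \<chi> \<psi>) O2 c2"
  let ?L = "app d\<phi> \<phi> O1 (c1 @ ?B # c3)"
  let ?s1 = "\<lambda>(p, m, r). d\<psi> * degsum p" and ?v1 = "\<lambda>(p, m, r). \<chi> O2 (p @ app d\<psi> \<psi> (endpt O2 p) m # r)"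
  let ?s2 = "\<lambda>(p, m, r). d\<chi> * d\<psi> + d\<chi> * degsum p + 1"
    and ?v2 = "\<lambda>(p, m, r). \<psi> O2 (p @ app d\<chi> \<chi> (endpt O2 p) m # r)"
  let ?V1 = "\<lambda>k. \<phi> O1 (c1 @ ?B\<lparr>lval := ?v1 k\<rparr> # c3)" and ?V2 = "\<lambda>k. \<phi> O1 (c1 @ ?B\<lparr>lval := ?v2 k\<rparr> # c3)"
  let ?val = "(\<Sum>k\<in>decomp3 c2. sgm (?s1 k) (?V1 k)) + (\<Sum>k\<in>decomp3 c2. sgm (?s2 k) (?V2 k))"
  let ?t = "\<lambda>x. tensor (pre @ ?L\<lparr>lval := x\<rparr> # post)"
  let ?K = "\<lambda>L. pre @ app d\<phi> \<phi> O1 (c1 @ L # c3) # post"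
  have B: "?B = ?B\<lparr>lval := (\<Sum>k\<in>decomp3 c2. sgm (?s1 k) (?v1 k)) + (\<Sum>k\<in>decomp3 c2. sgm (?s2 k) (?v2 k))\<rparr>"
    by (simp add: br_decomp3 split_def app_def)
  have v1: "?v1 k \<in> H (lsrc ?B) (ltgt ?B) (ldeg ?B)" and v2: "?v2 k \<in> H (lsrc ?B) (ltgt ?B) (ldeg ?B)"
    if "k \<in> decomp3 c2" for k
    using that cochain_value_insert_app[OF c\<chi> c\<psi> vc2] cochain_value_insert_app[OF c\<psi> c\<chi> vc2]
    by (auto simp: algebra_simps split: prod.splits)
  have "\<phi> O1 (c1 @ ?B # c3) = ?val"
    by (subst B, rule cochain_letter_sum2[OF gh c\<phi>]) (use vO v1 v2 in auto)
  then have L: "?L = ?L\<lparr>lval := ?val\<rparr>"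
    by (simp add: app_def)
  have V1: "?V1 k \<in> H (lsrc ?L) (ltgt ?L) (ldeg ?L)" and V2: "?V2 k \<in> H (lsrc ?L) (ltgt ?L) (ldeg ?L)"
    if "k \<in> decomp3 c2" for k
    using cochain_value_in[OF c\<phi> vO] v1[OF that] v2[OF that] by simp_all
  have split: "?t ?val - ((\<Sum>k\<in>decomp3 c2. sgm (?s1 k) (?t (?V1 k))) + (\<Sum>k\<in>decomp3 c2. sgm (?s2 k) (?t (?V2 k))))
      \<in> tensor_rel H"
    by (rule tensor_rel_letter_sum2[OF gh]) (use cyc V1 V2 in auto)
  have first: "(\<Sum>k\<in>decomp3 c2. sgm (?s1 k) (?t (?V1 k))) = circ_chain d\<chi> \<chi> d\<psi> \<psi> O2 c2 ?K"
    unfolding circ_chain_def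
    apply (rule sum.cong[OF refl])
    apply (clarsimp simp: decomp3_def)
    apply (subst app_update_lval[where d'=d\<chi>]) apply simp apply (simp add: algebra_simps)
    apply (subst app_update_lval[where d'=d\<phi>]) apply simp apply simp apply simp
    done
  have second: "(\<Sum>k\<in>decomp3 c2. sgm (?s2 k) (?t (?V2 k))) = - sgm (d\<chi> * d\<psi>) (circ_chain d\<psi> \<psi> d\<chi> \<chi> O2 c2 ?K)"
    unfolding circ_chain_def sgm_sum sum_negf[symmetric]
    apply (rule sum.cong[OF refl])
    apply (clarsimp simp: decomp3_def)
    apply (subst app_update_lval[where d'=d\<psi>]) apply simp apply (simp add: algebra_simps)
    apply (subst app_update_lval[where d'=d\<phi>]) apply simp apply simp
    apply (simp only: uminus_sgm sgm_sgm)
    done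
  show ?thesis
    using split unfolding L[symmetric] first second by (simp only: diff_conv_add_uminus)
qed

lemma rho_bracket_outer:
  assumes gh: "graded_homs H" and c\<phi>: "is_cochain H d\<phi> \<phi>" and c\<chi>: "is_cochain H d\<chi> \<chi>"
    and c\<psi>: "is_cochain H d\<psi> \<psi>" and cyc: "cyc_word H (x0 # Y)"
  shows "chain (rho (d\<phi> + d\<chi>) d\<psi> (br d\<phi> d\<chi> \<phi> \<chi>) \<psi> (x0 # Y))
           - (rho_circ_outer d\<phi> \<phi> d\<chi> \<chi> d\<psi> \<psi> x0 Y - sgm (d\<phi> * d\<chi>) (rho_circ_outer d\<chi> \<chi> d\<phi> \<phi> d\<psi> \<psi> x0 Y))
         \<in> tensor_rel H"
proof -
  note x0 = cyc_word_ConsD[OF cyc]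
  let ?src = "\<lambda>u v. last_tgt (x0 # u @ v)"
  let ?arg = "\<lambda>u v c1 c2 c3. c1 @ app d\<psi> \<psi> (last_tgt (x0 # u @ v @ c1)) c2 # c3 @ x0 # u"
  have "chain (rho (d\<phi> + d\<chi>) d\<psi> (br d\<phi> d\<chi> \<phi> \<chi>) \<psi> (x0 # Y))
          - (rho_circ_outer d\<phi> \<phi> d\<chi> \<chi> d\<psi> \<psi> x0 Y - sgm (d\<phi> * d\<chi>) (rho_circ_outer d\<chi> \<chi> d\<phi> \<phi> d\<psi> \<psi> x0 Y))
      = (\<Sum>(u, v, c1, c2, c3)\<in>decomp5 Y. sgm (rho_sign d\<psi> x0 u v c1 c2 c3)
          (tensor ([] @ app (d\<phi> + d\<chi>) (br d\<phi> d\<chi> \<phi> \<chi>) (?src u v) (?arg u v c1 c2 c3) # v)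
           - (circ_chain d\<phi> \<phi> d\<chi> \<chi> (?src u v) (?arg u v c1 c2 c3) (\<lambda>L. [] @ L # v)
              - sgm (d\<phi> * d\<chi>) (circ_chain d\<chi> \<chi> d\<phi> \<phi> (?src u v) (?arg u v c1 c2 c3) (\<lambda>L. [] @ L # v)))))"
    unfolding chain_rho rho_circ_outer_def rho_term_def
    by (simp add: sgm_sum sgm_diff sgm_sgm sum_subtractf split_def add.commute)
  also have "\<dots> \<in> tensor_rel H"
  proof (rule tensor_rel_sum[OF finite_decomp5], clarify, rule tensor_rel_sgm,
      rule tensor_rel_bracket_letter[OF gh c\<phi> c\<chi>])
    fix u v c1 c2 c3 assume "(u, v, c1, c2, c3) \<in> decomp5 Y"
    then have Y: "Y = u @ v @ c1 @ c2 @ c3"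
      by (simp add: decomp5_def)
    show "valid_word H (?src u v) (?arg u v c1 c2 c3)"
      using x0 Y by (simp add: last_tgt_Cons valid_letter_app[OF c\<psi>])
    fix x assume "x \<in> H (?src u v) (endpt (?src u v) (?arg u v c1 c2 c3)) (d\<phi> + d\<chi> + degsum (?arg u v c1 c2 c3))"
    then show "cyc_word H ([] @ (app (d\<phi> + d\<chi>) (br d\<phi> d\<chi> \<phi> \<chi>) (?src u v) (?arg u v c1 c2 c3))\<lparr>lval := x\<rparr> # v)"
      using x0 Y by (auto simp: last_tgt_Cons cyc_word_def valid_letter_def app_def endpt_def split: if_splits)
  qed
  finally show ?thesis .
qed

lemma rho_bracket_inner:
  assumes gh: "graded_homs H" and c\<phi>: "is_cochain H d\<phi> \<phi>" and c\<chi>: "is_cochain H d\<chi> \<chi>"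
    and c\<psi>: "is_cochain H d\<psi> \<psi>" and cyc: "cyc_word H (x0 # Y)"
  shows "chain (rho d\<phi> (d\<chi> + d\<psi>) \<phi> (br d\<chi> d\<psi> \<chi> \<psi>) (x0 # Y))
           - (rho_circ_inner d\<phi> \<phi> d\<chi> \<chi> d\<psi> \<psi> x0 Y - sgm (d\<chi> * d\<psi>) (rho_circ_inner_swap d\<phi> \<phi> d\<chi> \<chi> d\<psi> \<psi> x0 Y))
         \<in> tensor_rel H"
proof -
  note x0 = cyc_word_ConsD[OF cyc]
  let ?src = "\<lambda>u v. last_tgt (x0 # u @ v)"
  let ?B = "\<lambda>u v c1 c2. app (d\<chi> + d\<psi>) (br d\<chi> d\<psi> \<chi> \<psi>) (last_tgt (x0 # u @ v @ c1)) c2"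
  let ?ctx = "\<lambda>u v c1 c3 L. [] @ app d\<phi> \<phi> (last_tgt (x0 # u @ v)) (c1 @ L # (c3 @ x0 # u)) # v"
  have "chain (rho d\<phi> (d\<chi> + d\<psi>) \<phi> (br d\<chi> d\<psi> \<chi> \<psi>) (x0 # Y))
          - (rho_circ_inner d\<phi> \<phi> d\<chi> \<chi> d\<psi> \<psi> x0 Y - sgm (d\<chi> * d\<psi>) (rho_circ_inner_swap d\<phi> \<phi> d\<chi> \<chi> d\<psi> \<psi> x0 Y))
      = (\<Sum>(u, v, c1, c2, c3)\<in>decomp5 Y. sgm (rho_sign (d\<chi> + d\<psi>) x0 u v c1 c2 c3)
          (tensor (?ctx u v c1 c3 (?B u v c1 c2))
           - (circ_chain d\<chi> \<chi> d\<psi> \<psi> (last_tgt (x0 # u @ v @ c1)) c2 (?ctx u v c1 c3)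
              - sgm (d\<chi> * d\<psi>) (circ_chain d\<psi> \<psi> d\<chi> \<chi> (last_tgt (x0 # u @ v @ c1)) c2 (?ctx u v c1 c3)))))"
    unfolding chain_rho rho_circ_inner_def rho_circ_inner_swap_def rho_term_def
    by (simp add: sgm_sum sgm_diff sgm_sgm sum_subtractf split_def add.commute)
  also have "\<dots> \<in> tensor_rel H"
  proof (rule tensor_rel_sum[OF finite_decomp5], clarify, rule tensor_rel_sgm,
      rule tensor_rel_bracket_in_letter[OF gh c\<phi> c\<chi> c\<psi>])
    fix u v c1 c2 c3 assume "(u, v, c1, c2, c3) \<in> decomp5 Y"
    then have Y: "Y = u @ v @ c1 @ c2 @ c3"
      by (simp add: decomp5_def)
    show "valid_word H (last_tgt (x0 # u @ v @ c1)) c2"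
      using x0 Y by (simp add: last_tgt_Cons)
    fix x assume "x \<in> H (last_tgt (x0 # u @ v @ c1)) (endpt (last_tgt (x0 # u @ v @ c1)) c2) (d\<chi> + d\<psi> + degsum c2)"
    then show "valid_word H (?src u v) (c1 @ (?B u v c1 c2)\<lparr>lval := x\<rparr> # c3 @ x0 # u)"
      using x0 Y by (simp add: last_tgt_Cons valid_letter_def app_def)
  next
    fix u v c1 c2 c3 assume "(u, v, c1, c2, c3) \<in> decomp5 Y"
    then have Y: "Y = u @ v @ c1 @ c2 @ c3"
      by (simp add: decomp5_def)
    fix y assume "y \<in> H (?src u v) (endpt (?src u v) (c1 @ ?B u v c1 c2 # c3 @ x0 # u))
        (d\<phi> + degsum (c1 @ ?B u v c1 c2 # c3 @ x0 # u))"
    then show "cyc_word H ([] @ (app d\<phi> \<phi> (?src u v) (c1 @ ?B u v c1 c2 # c3 @ x0 # u))\<lparr>lval := y\<rparr> # v)"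
      using x0 Y by (auto simp: last_tgt_Cons cyc_word_def valid_letter_def app_def endpt_def split: if_splits)
  qed
  finally show ?thesis .
qed

theorem proposition6p2:
  fixes H :: "'o \<Rightarrow> 'o \<Rightarrow> int \<Rightarrow> 'm::ab_group_add set"
    and \<phi>1 \<phi>2 \<psi> :: "('o, 'm) cochain"
    and d1 d2 e :: int
    and X :: "('o, 'm) letter list"
  assumes "graded_homs H"
    and "is_cochain H d1 \<phi>1" and "is_cochain H d2 \<phi>2" and "is_cochain H e \<psi>"
    and "cyc_word H X"
  shows "chain (rho (d1 + d2) e (br d1 d2 \<phi>1 \<phi>2) \<psi> X)
         - chain (rho d1 (d2 + e) \<phi>1 (br d2 e \<phi>2 \<psi>) X)
         + chain (scale (sg (d1 * d2)) (rho d2 (d1 + e) \<phi>2 (br d1 e \<phi>1 \<psi>) X))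
         - (chain (comm d1 (d2 + e) (Lie d1 \<phi>1) (rho d2 e \<phi>2 \<psi>) X)
            - chain (scale (sg (d1 * d2)) (comm d2 (d1 + e) (Lie d2 \<phi>2) (rho d1 e \<phi>1 \<psi>) X)))
         \<in> tensor_rel H"
proof -
  obtain x0 Y where X: "X = x0 # Y"
    using \<open>cyc_word H X\<close> by (cases X) (auto simp: cyc_word_def)
  have cyc: "cyc_word H (x0 # Y)"
    using \<open>cyc_word H X\<close> X by simp
  show ?thesis
    unfolding X chain_scale_sg
    by (rule tensor_rel_combination[OF rho_bracket_outer[OF assms(1-4) cyc]
          rho_bracket_inner[OF assms(1-4) cyc] rho_bracket_inner[OF assms(1,3,2,4) cyc]
          nested_terms_cancel])
qed

end
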